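(* Let $\nu_0,\nu_1$ be nonnegative (not necessarily normalized) densities on $\mathbb{R}^d$, let $\sigma:[0,1]\to(0,\infty)$ be differentiable, $\alpha>0$, and $\Psi:\mathbb{R}\to[0,+\infty]$. The regularized unbalanced optimal transport (RUOT) problem $$\inf_{(p,\boldsymbol b,g)}\int_0^1\!\!\int_{\mathbb{R}^d}\Big[\tfrac12\|\boldsymbol b(\boldsymbol x,t)\|_2^2+\alpha\Psi(g(\boldsymbol x,t))\Big]p(\boldsymbol x,t)\,\mathrm{d}\boldsymbol x\,\mathrm{d}t,$$ over triples with $p(\cdot,0)=\nu_0$, $p(\cdot,1)=\nu_1$, $p$ absolutely continuous, $\lim_{|\boldsymbol x|\to\infty}p(\boldsymbol x,t)=0$, and $$\partial_t p=-\nabla_{\boldsymbol x}\cdot(p\boldsymbol b)+\tfrac12\sigma^2(t)\Delta_{\boldsymbol x}p+gp,$$ is equivalent to the problem $$\inf_{(p,\boldsymbol v,g)}\int_0^1\!\!\int_{\mathbb{R}^d}\Big[\tfrac12\|\boldsymbol v\|_2^2+\tfrac{\sigma^4(t)}{8}\|\nabla_{\boldsymbol x}\log p\|_2^2-\tfrac{\sigma^2(t)}{2}(1+\log p)\,g-\tfrac12\tfrac{\mathrm{d}\sigma^2(t)}{\mathrm{d}t}\log p+\alpha\Psi(g)\Big]p\,\mathrm{d}\boldsymbol x\,\mathrm{d}t$$ over triples $(p,\boldsymbol v,g)$ with the same boundary conditions $p(\cdot,0)=\nu_0$, $p(\cdot,1)=\nu_1$, $p$ absolutely continuous, $\lim_{|\boldsymbol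 x|\to\infty}p=0$, and $$\partial_t p=-\nabla_{\boldsymbol x}\cdot(p\boldsymbol v)+gp,$$ in the following sense: the map $(p,\boldsymbol b,g)\mapsto(p,\boldsymbol v,g)$ with $\boldsymbol v=\boldsymbol b-\tfrac12\sigma^2(t)\nabla_{\boldsymbol x}\log p$ is a bijection between the admissible sets, and the two objective values differ by the constant $\tfrac12\big(\sigma^2(1)H(\nu_1)-\sigma^2(0)H(\nu_0)\big)$, where $H(q)=\int_{\mathbb{R}^d}q\log q\,\mathrm{d}\boldsymbol x$; in particular the minimizers correspond.
   Context: All functions are assumed smooth enough (and decaying at infinity) for the integrations by parts to be valid; $\|\cdot\|_2$ is the Euclidean norm; $\Delta_{\boldsymbol x}$ is the Laplacian in $\boldsymbol x$. $\boldsymbol b,\boldsymbol v:\mathbb{R}^d\times[0,1]\to\mathbb{R}^d$ are vector fields and $g:\mathbb{R}^d\times[0,1]\to\mathbb{R}$ is a scalar growth/death rate. *)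

theory Defs
  imports "HOL-Analysis.Analysis"
begin

definition pd :: "'a::euclidean_space \<Rightarrow> ('a \<Rightarrow> real) \<Rightarrow> 'a \<Rightarrow> real" where
  "pd i f x = deriv (\<lambda>s. f (x + s *\<^sub>R i)) 0"

definition grad :: "('a::euclidean_space \<Rightarrow> real) \<Rightarrow> 'a \<Rightarrow> 'a" where
  "grad f x = (\<Sum>i\<in>Basis. pd i f x *\<^sub>R i)"

definition divg :: "('a::euclidean_space \<Rightarrow> 'a) \<Rightarrow> 'a \<Rightarrow> real" where
  "divg F x = (\<Sum>i\<in>Basis. pd i (\<lambda>y. F y \<bullet> i) x)"

definition lap :: "('a::euclidean_space \<Rightarrow> real) \<Rightarrow> 'a \<Rightarrow> real" where
  "lap f x = (\<Sum>i\<in>Basis. pd i (pd i f) x)"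

definition dt :: "('a \<Rightarrow> real \<Rightarrow> real) \<Rightarrow> 'a \<Rightarrow> real \<Rightarrow> real" where
  "dt p x t = vector_derivative (\<lambda>s. p x s) (at t within {0..1})"

definition dsig2 :: "(real \<Rightarrow> real) \<Rightarrow> real \<Rightarrow> real" where
  "dsig2 \<sigma> t = vector_derivative (\<lambda>s. (\<sigma> s)\<^sup>2) (at t within {0..1})"

definition score :: "('a::euclidean_space \<Rightarrow> real \<Rightarrow> real) \<Rightarrow> 'a \<Rightarrow> real \<Rightarrow> 'a" where
  "score p x t = grad (\<lambda>y. ln (p y t)) x"

definition abs_cont_on :: "real set \<Rightarrow> (real \<Rightarrow> real) \<Rightarrow> bool" where
  "abs_cont_on S f \<longleftrightarrow> (\<forall>\<epsilon>>0. \<exists>\<delta>>0. \<forall>(n::nat) a b.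
      (\<forall>k<n. a k \<in> S \<and> b k \<in> S \<and> a k \<le> b k) \<and> (\<forall>k. Suc k < n \<longrightarrow> b k \<le> a (Suc k)) \<and>
      (\<Sum>k<n. b k - a k) < \<delta> \<longrightarrow> (\<Sum>k<n. \<bar>f (b k) - f (a k)\<bar>) < \<epsilon>)"

definition entropy :: "('a::euclidean_space \<Rightarrow> real) \<Rightarrow> real" where
  "entropy q = (LINT x|lborel. q x * ln (q x))"

section \<open>Standing regularity class
  ("smooth enough, decaying at infinity, so that the integrations by parts are valid")\<close>

definition regular :: "(real \<Rightarrow> real) \<Rightarrow> ('a::euclidean_space \<Rightarrow> real \<Rightarrow> real) \<Rightarrow>
    ('a \<Rightarrow> real \<Rightarrow> 'a) \<Rightarrow> ('a \<Rightarrow> real \<Rightarrow> real) \<Rightarrow> bool" where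
  "regular \<sigma> p w g \<longleftrightarrow>
    (\<forall>t\<in>{0..1}.
      \<comment> \<open>positivity (so that log p makes sense) and smoothness\<close>
      (\<forall>x. p x t > 0) \<and>
      (\<forall>x. (\<lambda>s. p x s) differentiable (at t within {0..1})) \<and>
      (\<forall>x. (\<lambda>y. p y t) differentiable (at x)) \<and>
      (\<forall>i\<in>Basis. \<forall>x. (\<lambda>y. pd i (\<lambda>z. p z t) y) differentiable (at x)) \<and>
      (\<forall>x. (\<lambda>y. p y t *\<^sub>R w y t) differentiable (at x)) \<and>
      \<comment> \<open>spatial integrability of all terms appearing\<close>
      integrable lborel (\<lambda>x. p x t * (norm (w x t))\<^sup>2) \<and>
      integrable lborel (\<lambda>x. p x t * (norm (score p x t))\<^sup>2) \<and>
      integrable lborel (\<lambda>x. p x t * (w x t \<bullet> score p x t)) \<and>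
      integrable lborel (\<lambda>x. p x t * ln (p x t)) \<and>
      integrable lborel (\<lambda>x. g x t * p x t) \<and>
      integrable lborel (\<lambda>x. g x t * p x t * ln (p x t)) \<and>
      integrable lborel (\<lambda>x. dt p x t * (1 + ln (p x t))) \<and>
      integrable lborel (\<lambda>x. divg (\<lambda>y. p y t *\<^sub>R w y t) x * (1 + ln (p x t))) \<and>
      integrable lborel (\<lambda>x. lap (\<lambda>y. p y t) x * (1 + ln (p x t))) \<and>
      \<comment> \<open>validity of the spatial integrations by parts (vanishing boundary terms)\<close>
      (LINT x|lborel. divg (\<lambda>y. p y t *\<^sub>R w y t) x * (1 + ln (p x t)))
        = - (LINT x|lborel. p x t * (w x t \<bullet> score p x t)) \<and>
      (LINT x|lborel. lap (\<lambda>y. p y t) x * (1 + ln (p x t)))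
        = - (LINT x|lborel. p x t * (norm (score p x t))\<^sup>2) \<and>
      \<comment> \<open>differentiation of the entropy under the integral sign\<close>
      ((\<lambda>s. LINT x|lborel. p x s * ln (p x s)) has_real_derivative
          (LINT x|lborel. dt p x t * (1 + ln (p x t)))) (at t within {0..1})) \<and>
    \<comment> \<open>integrability in time of the spatial integrals\<close>
    set_integrable lborel {0..1} (\<lambda>t. LINT x|lborel. p x t * (norm (w x t))\<^sup>2) \<and>
    set_integrable lborel {0..1} (\<lambda>t. LINT x|lborel. p x t * (norm (score p x t))\<^sup>2) \<and>
    set_integrable lborel {0..1} (\<lambda>t. LINT x|lborel. p x t * (w x t \<bullet> score p x t)) \<and>
    set_integrable lborel {0..1} (\<lambda>t. LINT x|lborel. g x t * p x t * (1 + ln (p x t))) \<and>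
    set_integrable lborel {0..1} (\<lambda>t. dsig2 \<sigma> t * (LINT x|lborel. p x t * ln (p x t)))"

definition common_adm :: "('a::euclidean_space \<Rightarrow> real) \<Rightarrow> ('a \<Rightarrow> real) \<Rightarrow>
    ('a \<Rightarrow> real \<Rightarrow> real) \<Rightarrow> bool" where
  "common_adm \<nu>0 \<nu>1 p \<longleftrightarrow>
     (\<forall>x. p x 0 = \<nu>0 x) \<and> (\<forall>x. p x 1 = \<nu>1 x) \<and>
     (\<forall>x. abs_cont_on {0..1} (\<lambda>t. p x t)) \<and>
     (\<forall>t\<in>{0..1}. ((\<lambda>x. p x t) \<longlongrightarrow> 0) at_infinity)"

definition adm_ruot :: "(real \<Rightarrow> real) \<Rightarrow> ('a::euclidean_space \<Rightarrow> real) \<Rightarrow> ('a \<Rightarrow> real) \<Rightarrow>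
    (('a \<Rightarrow> real \<Rightarrow> real) \<times> ('a \<Rightarrow> real \<Rightarrow> 'a) \<times> ('a \<Rightarrow> real \<Rightarrow> real)) set" where
  "adm_ruot \<sigma> \<nu>0 \<nu>1 = {(p, b, g). common_adm \<nu>0 \<nu>1 p \<and> regular \<sigma> p b g \<and>
     (\<forall>t\<in>{0..1}. \<forall>x. dt p x t =
        - divg (\<lambda>y. p y t *\<^sub>R b y t) x + (1/2) * (\<sigma> t)\<^sup>2 * lap (\<lambda>y. p y t) x + g x t * p x t)}"

definition adm_ce :: "(real \<Rightarrow> real) \<Rightarrow> ('a::euclidean_space \<Rightarrow> real) \<Rightarrow> ('a \<Rightarrow> real) \<Rightarrow>
    (('a \<Rightarrow> real \<Rightarrow> real) \<times> ('a \<Rightarrow> real \<Rightarrow> 'a) \<times> ('a \<Rightarrow> real \<Rightarrow> real)) set" where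
  "adm_ce \<sigma> \<nu>0 \<nu>1 = {(p, v, g). common_adm \<nu>0 \<nu>1 p \<and> regular \<sigma> p v g \<and>
     (\<forall>t\<in>{0..1}. \<forall>x. dt p x t = - divg (\<lambda>y. p y t *\<^sub>R v y t) x + g x t * p x t)}"

definition psi_part :: "real \<Rightarrow> (real \<Rightarrow> ennreal) \<Rightarrow> ('a::euclidean_space \<Rightarrow> real \<Rightarrow> real) \<Rightarrow>
    ('a \<Rightarrow> real \<Rightarrow> real) \<Rightarrow> ereal" where
  "psi_part \<alpha> \<Psi> p g = enn2ereal (ennreal \<alpha> *
     (\<integral>\<^sup>+ t\<in>{0..1}. (\<integral>\<^sup>+ x. \<Psi> (g x t) * ennreal (p x t) \<partial>lborel) \<partial>lborel))"

definition J_ruot :: "real \<Rightarrow> (real \<Rightarrow> ennreal) \<Rightarrow>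
    (('a::euclidean_space \<Rightarrow> real \<Rightarrow> real) \<times> ('a \<Rightarrow> real \<Rightarrow> 'a) \<times> ('a \<Rightarrow> real \<Rightarrow> real)) \<Rightarrow> ereal" where
  "J_ruot \<alpha> \<Psi> z = (case z of (p, b, g) \<Rightarrow>
     ereal (LINT t:{0..1}|lborel. LINT x|lborel. (1/2) * (norm (b x t))\<^sup>2 * p x t)
     + psi_part \<alpha> \<Psi> p g)"

definition J_ce :: "(real \<Rightarrow> real) \<Rightarrow> real \<Rightarrow> (real \<Rightarrow> ennreal) \<Rightarrow>
    (('a::euclidean_space \<Rightarrow> real \<Rightarrow> real) \<times> ('a \<Rightarrow> real \<Rightarrow> 'a) \<times> ('a \<Rightarrow> real \<Rightarrow> real)) \<Rightarrow> ereal" where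
  "J_ce \<sigma> \<alpha> \<Psi> z = (case z of (p, v, g) \<Rightarrow>
     ereal (LINT t:{0..1}|lborel. LINT x|lborel.
        ((1/2) * (norm (v x t))\<^sup>2
         + (\<sigma> t)^4 / 8 * (norm (score p x t))\<^sup>2
         - (\<sigma> t)\<^sup>2 / 2 * (1 + ln (p x t)) * g x t
         - (1/2) * dsig2 \<sigma> t * ln (p x t)) * p x t)
     + psi_part \<alpha> \<Psi> p g)"

definition to_v :: "(real \<Rightarrow> real) \<Rightarrow>
    (('a::euclidean_space \<Rightarrow> real \<Rightarrow> real) \<times> ('a \<Rightarrow> real \<Rightarrow> 'a) \<times> ('a \<Rightarrow> real \<Rightarrow> real)) \<Rightarrow>
    (('a \<Rightarrow> real \<Rightarrow> real) \<times> ('a \<Rightarrow> real \<Rightarrow> 'a) \<times> ('a \<Rightarrow> real \<Rightarrow> real))" where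
  "to_v \<sigma> z = (case z of (p, b, g) \<Rightarrow>
     (p, \<lambda>x t. b x t - ((1/2) * (\<sigma> t)\<^sup>2) *\<^sub>R score p x t, g))"

end

theory Submission
  imports Defs
begin

text \<open>Since \<open>p \<nabla>log p = \<nabla>p\<close>, the flux of the drift \<open>b = v + \<sigma>\<^sup>2/2 \<nabla>log p\<close> is the flux
  of \<open>v\<close> plus \<open>\<sigma>\<^sup>2/2 \<nabla>p\<close>, whose divergence is the diffusion term \<open>\<sigma>\<^sup>2/2 \<Delta>p\<close>: the shift
  turns the Fokker-Planck equation into the continuity equation and preserves the regularity
  class, so it is a bijection of the admissible sets.
  Expanding \<open>|b|\<^sup>2\<close> leaves the cross term \<open>\<sigma>\<^sup>2 \<integral> p b\<cdot>\<nabla>log p\<close>. Along the Fokker-Planck flow,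
  integration by parts gives
  \<open>d/dt H(p\<^sub>t) = \<integral> p b\<cdot>\<nabla>log p - \<sigma>\<^sup>2/2 \<integral> p |\<nabla>log p|\<^sup>2 + \<integral> g p (1 + log p)\<close>,
  so the cross term is \<open>d/dt (\<sigma>\<^sup>2 H(p\<^sub>t))\<close> up to the Fisher information, growth and
  \<open>d\<sigma>\<^sup>2/dt\<close> terms of the second objective; integrating over \<open>[0,1]\<close> leaves the boundary
  term \<open>\<sigma>\<^sup>2(1) H(\<nu>\<^sub>1) - \<sigma>\<^sup>2(0) H(\<nu>\<^sub>0)\<close>.\<close>

lemma pd_eq_derivative:
  assumes "(f has_derivative f') (at x)"
  shows "pd i f x = f' i"
proof -
  have "((\<lambda>s::real. x + s *\<^sub>R i) has_derivative (\<lambda>s. s *\<^sub>R i)) (at 0)"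
    by (auto intro!: derivative_eq_intros)
  from has_derivative_compose[OF this, of f f'] assms
  have "((\<lambda>s. f (x + s *\<^sub>R i)) has_derivative (\<lambda>s. f' (s *\<^sub>R i))) (at 0)"
    by simp
  moreover have "(\<lambda>s. f' (s *\<^sub>R i)) = (*) (f' i)"
    using has_derivative_linear[OF assms] by (auto simp: linear_scale)
  ultimately have "((\<lambda>s. f (x + s *\<^sub>R i)) has_field_derivative f' i) (at 0)"
    by (simp add: has_field_derivative_def)
  then show ?thesis
    unfolding pd_def by (rule DERIV_imp_deriv)
qed

lemma grad_inner_Basis: "i \<in> Basis \<Longrightarrow> grad f y \<bullet> i = pd i f y"
  by (simp add: grad_def inner_sum_left inner_Basis if_distrib cong: if_cong)

lemma divg_grad: "divg (grad f) x = lap f x"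
  unfolding divg_def lap_def by (rule sum.cong) (auto simp: grad_inner_Basis)

lemma grad_differentiable:
  assumes "\<And>i. i \<in> Basis \<Longrightarrow> pd i f differentiable (at x)"
  shows "grad f differentiable (at x)"
  unfolding grad_def using assms by (auto intro!: differentiable_sum differentiable_scaleR)

lemma scaleR_grad_ln:
  fixes q :: "'a::euclidean_space \<Rightarrow> real"
  assumes pos: "q y > 0" and "q differentiable (at y)"
  shows "q y *\<^sub>R grad (\<lambda>z. ln (q z)) y = grad q y"
proof -
  obtain q' where q': "(q has_derivative q') (at y)"
    using assms(2) unfolding differentiable_def by blast
  have "(ln has_derivative (*) (1 / q y)) (at (q y))"
    using DERIV_ln[OF pos] by (simp add: has_field_derivative_def inverse_eq_divide)
  from has_derivative_compose[OF q' this]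
  have "pd j (\<lambda>z. ln (q z)) y = (1 / q y) * q' j" for j
    by (intro pd_eq_derivative) simp
  moreover have "pd j q y = q' j" for j
    using q' by (rule pd_eq_derivative)
  ultimately show ?thesis
    using pos by (simp add: grad_def scaleR_sum_right)
qed

lemma divg_add_scaleR:
  fixes F G :: "'a::euclidean_space \<Rightarrow> 'a"
  assumes "F differentiable (at x)" "G differentiable (at x)"
  shows "divg (\<lambda>y. F y + c *\<^sub>R G y) x = divg F x + c * divg G x"
proof -
  obtain F' where F': "(F has_derivative F') (at x)"
    using assms(1) unfolding differentiable_def by blast
  obtain G' where G': "(G has_derivative G') (at x)"
    using assms(2) unfolding differentiable_def by blast
  have "pd i (\<lambda>y. (F y + c *\<^sub>R G y) \<bullet> i) x = F' i \<bullet> i + c * (G' i \<bullet> i)"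
    and "pd i (\<lambda>y. F y \<bullet> i) x = F' i \<bullet> i" and "pd i (\<lambda>y. G y \<bullet> i) x = G' i \<bullet> i" for i
    by (rule pd_eq_derivative, auto intro!: derivative_eq_intros F' G' simp: inner_add_left)+
  then show ?thesis
    unfolding divg_def by (simp add: sum.distrib sum_distrib_left)
qed

lemma power2_norm_add_scaleR:
  "(norm (a + c *\<^sub>R b))\<^sup>2 = (norm a)\<^sup>2 + 2 * c * (a \<bullet> b) + c\<^sup>2 * (norm b)\<^sup>2"
  unfolding power2_norm_eq_inner
  by (simp add: inner_commute algebra_simps power2_eq_square)

lemma set_integrable_mult_continuous:
  fixes f h :: "real \<Rightarrow> real"
  assumes f: "set_integrable lborel {a..b} f" and h: "continuous_on {a..b} h"
  shows "set_integrable lborel {a..b} (\<lambda>t. h t * f t)"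
proof -
  have "f absolutely_integrable_on {a..b}"
    using f by (simp add: set_integrable_def absolutely_integrable_on_def integrable_completion)
  then have "(\<lambda>t. h t * f t) absolutely_integrable_on {a..b}"
    using compact_imp_bounded[OF compact_continuous_image[OF h compact_Icc]]
    by (intro absolutely_integrable_bounded_measurable_product_real
        continuous_imp_measurable_on_sets_lebesgue h) auto
  moreover have "(\<lambda>t. indicator {a..b} t *\<^sub>R (h t * f t)) \<in> borel_measurable lborel"
  proof -
    have "(\<lambda>t. indicator {a..b} t *\<^sub>R h t) \<in> borel_measurable lborel"
      using borel_measurable_continuous_on_indicator[OF _ h] by simp
    moreover have "(\<lambda>t. indicator {a..b} t *\<^sub>R f t) \<in> borel_measurable lborel"
      using f unfolding set_integrable_def by blast
    ultimately have "(\<lambda>t. (indicator {a..b} t *\<^sub>R h t) * (indicator {a..b} t *\<^sub>R f t))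
        \<in> borel_measurable lborel"
      by measurable
    then show ?thesis
      by (rule measurable_cong[THEN iffD1, rotated]) (simp add: indicator_def)
  qed
  ultimately show ?thesis
    by (simp add: set_integrable_def absolutely_integrable_on_def integrable_completion)
qed

definition kinetic_energy ::
    "('a::euclidean_space \<Rightarrow> real \<Rightarrow> real) \<Rightarrow> ('a \<Rightarrow> real \<Rightarrow> 'a) \<Rightarrow> real \<Rightarrow> real" where
  "kinetic_energy p w t = (LINT x|lborel. p x t * (norm (w x t))\<^sup>2)"

definition fisher_information :: "('a::euclidean_space \<Rightarrow> real \<Rightarrow> real) \<Rightarrow> real \<Rightarrow> real" where
  "fisher_information p t = (LINT x|lborel. p x t * (norm (score p x t))\<^sup>2)"

definition score_pairing ::
    "('a::euclidean_space \<Rightarrow> real \<Rightarrow> real) \<Rightarrow> ('a \<Rightarrow> real \<Rightarrow> 'a) \<Rightarrow> real \<Rightarrow> real" where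
  "score_pairing p w t = (LINT x|lborel. p x t * (w x t \<bullet> score p x t))"

definition growth_entropy ::
    "('a::euclidean_space \<Rightarrow> real \<Rightarrow> real) \<Rightarrow> ('a \<Rightarrow> real \<Rightarrow> real) \<Rightarrow> real \<Rightarrow> real" where
  "growth_entropy p g t = (LINT x|lborel. g x t * p x t * (1 + ln (p x t)))"

lemma regular_smooth:
  assumes "regular \<sigma> p w g" "t \<in> {0..1}"
  shows "p x t > 0" and "(\<lambda>y. p y t) differentiable (at x)"
    and "i \<in> Basis \<Longrightarrow> pd i (\<lambda>y. p y t) differentiable (at x)"
    and "(\<lambda>y. p y t *\<^sub>R w y t) differentiable (at x)"
  using assms unfolding regular_def by blast+

lemma regular_integrable:
  assumes "regular \<sigma> p w g" "t \<in> {0..1}"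
  shows "integrable lborel (\<lambda>x. p x t * (norm (w x t))\<^sup>2)"
    and "integrable lborel (\<lambda>x. p x t * (norm (score p x t))\<^sup>2)"
    and "integrable lborel (\<lambda>x. p x t * (w x t \<bullet> score p x t))"
    and "integrable lborel (\<lambda>x. p x t * ln (p x t))"
    and "integrable lborel (\<lambda>x. g x t * p x t)"
    and "integrable lborel (\<lambda>x. g x t * p x t * ln (p x t))"
    and "integrable lborel (\<lambda>x. divg (\<lambda>y. p y t *\<^sub>R w y t) x * (1 + ln (p x t)))"
    and "integrable lborel (\<lambda>x. lap (\<lambda>y. p y t) x * (1 + ln (p x t)))"
  using assms unfolding regular_def by blast+

lemma regular_integration_by_parts:
  assumes "regular \<sigma> p w g" "t \<in> {0..1}"
  shows "(LINT x|lborel. divg (\<lambda>y. p y t *\<^sub>R w y t) x * (1 + ln (p x t))) = - score_pairing p w t"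
    and "(LINT x|lborel. lap (\<lambda>y. p y t) x * (1 + ln (p x t))) = - fisher_information p t"
  using assms unfolding regular_def score_pairing_def fisher_information_def by blast+

lemma regular_entropy_derivative:
  assumes "regular \<sigma> p w g" "t \<in> {0..1}"
  shows "((\<lambda>s. entropy (\<lambda>x. p x s)) has_real_derivative
           (LINT x|lborel. dt p x t * (1 + ln (p x t)))) (at t within {0..1})"
  using assms unfolding regular_def entropy_def by blast

lemma regular_growth_entropy:
  assumes "regular \<sigma> p w g" "t \<in> {0..1}"
  shows "growth_entropy p g t = (LINT x|lborel. g x t * p x t) + (LINT x|lborel. g x t * p x t * ln (p x t))"
proof -
  have "(\<lambda>x. g x t * p x t * (1 + ln (p x t))) = (\<lambda>x. g x t * p x t + g x t * p x t * ln (p x t))"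
    by (simp add: algebra_simps)
  then show ?thesis
    unfolding growth_entropy_def using regular_integrable[OF assms] by simp
qed

lemma regular_time_integrable:
  assumes "regular \<sigma> p w g"
  shows "set_integrable lborel {0..1} (kinetic_energy p w)"
    and "set_integrable lborel {0..1} (fisher_information p)"
    and "set_integrable lborel {0..1} (score_pairing p w)"
    and "set_integrable lborel {0..1} (growth_entropy p g)"
    and "set_integrable lborel {0..1} (\<lambda>t. dsig2 \<sigma> t * entropy (\<lambda>x. p x t))"
  using assms unfolding regular_def kinetic_energy_def[abs_def] fisher_information_def[abs_def]
    score_pairing_def[abs_def] growth_entropy_def[abs_def] entropy_def
  by blast+

lemma regular_change_drift:
  assumes "regular \<sigma> p w g"
    and "\<And>t x. t \<in> {0..1} \<Longrightarrow> (\<lambda>y. p y t *\<^sub>R w' y t) differentiable (at x)"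
    and "\<And>t. t \<in> {0..1} \<Longrightarrow> integrable lborel (\<lambda>x. p x t * (norm (w' x t))\<^sup>2)"
    and "\<And>t. t \<in> {0..1} \<Longrightarrow> integrable lborel (\<lambda>x. p x t * (w' x t \<bullet> score p x t))"
    and "\<And>t. t \<in> {0..1} \<Longrightarrow>
           integrable lborel (\<lambda>x. divg (\<lambda>y. p y t *\<^sub>R w' y t) x * (1 + ln (p x t)))"
    and "\<And>t. t \<in> {0..1} \<Longrightarrow>
           (LINT x|lborel. divg (\<lambda>y. p y t *\<^sub>R w' y t) x * (1 + ln (p x t))) = - score_pairing p w' t"
    and "set_integrable lborel {0..1} (kinetic_energy p w')"
    and "set_integrable lborel {0..1} (score_pairing p w')"
  shows "regular \<sigma> p w' g"
  using assms unfolding regular_def kinetic_energy_def[abs_def] score_pairing_def[abs_def] by blast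

lemma flux_add_score:
  assumes "regular \<sigma> p w g" "t \<in> {0..1}"
  shows "(\<lambda>y. p y t *\<^sub>R (w y t + c *\<^sub>R score p y t))
           = (\<lambda>y. p y t *\<^sub>R w y t + c *\<^sub>R grad (\<lambda>y. p y t) y)"
proof
  fix y
  have "p y t *\<^sub>R score p y t = grad (\<lambda>y. p y t) y"
    unfolding score_def using regular_smooth[OF assms] by (intro scaleR_grad_ln)
  then show "p y t *\<^sub>R (w y t + c *\<^sub>R score p y t) = p y t *\<^sub>R w y t + c *\<^sub>R grad (\<lambda>y. p y t) y"
    by (metis scaleR_add_right scaleR_left_commute)
qed

lemma flux_add_score_differentiable:
  assumes "regular \<sigma> p w g" "t \<in> {0..1}"
  shows "(\<lambda>y. p y t *\<^sub>R (w y t + c *\<^sub>R score p y t)) differentiable (at x)"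
proof -
  have "grad (\<lambda>y. p y t) differentiable (at x)"
    using regular_smooth(3)[OF assms] by (rule grad_differentiable)
  then show ?thesis
    unfolding flux_add_score[OF assms] using regular_smooth(4)[OF assms]
    by (auto intro: differentiable_add differentiable_scaleR[of "\<lambda>_. c", OF differentiable_const])
qed

lemma divg_flux_add_score:
  assumes "regular \<sigma> p w g" "t \<in> {0..1}"
  shows "divg (\<lambda>y. p y t *\<^sub>R (w y t + c *\<^sub>R score p y t)) x
           = divg (\<lambda>y. p y t *\<^sub>R w y t) x + c * lap (\<lambda>y. p y t) x"
  unfolding flux_add_score[OF assms] using regular_smooth[OF assms]
  by (simp add: divg_add_scaleR grad_differentiable divg_grad)

lemma score_shift_moments:
  assumes R: "regular \<sigma> p w g" and t: "t \<in> {0..1}"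
  shows "integrable lborel (\<lambda>x. p x t * (norm (w x t + c *\<^sub>R score p x t))\<^sup>2)"
    and "integrable lborel (\<lambda>x. p x t * ((w x t + c *\<^sub>R score p x t) \<bullet> score p x t))"
    and "(LINT x|lborel. p x t * (norm (w x t + c *\<^sub>R score p x t))\<^sup>2)
           = kinetic_energy p w t + 2 * c * score_pairing p w t + c\<^sup>2 * fisher_information p t"
    and "(LINT x|lborel. p x t * ((w x t + c *\<^sub>R score p x t) \<bullet> score p x t))
           = score_pairing p w t + c * fisher_information p t"
proof -
  have norm_eq: "(\<lambda>x. p x t * (norm (w x t + c *\<^sub>R score p x t))\<^sup>2)
      = (\<lambda>x. p x t * (norm (w x t))\<^sup>2 + 2 * c * (p x t * (w x t \<bullet> score p x t))
             + c\<^sup>2 * (p x t * (norm (score p x t))\<^sup>2))"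
    by (simp add: power2_norm_add_scaleR algebra_simps)
  have inner_eq: "(\<lambda>x. p x t * ((w x t + c *\<^sub>R score p x t) \<bullet> score p x t))
      = (\<lambda>x. p x t * (w x t \<bullet> score p x t) + c * (p x t * (norm (score p x t))\<^sup>2))"
    by (simp add: power2_norm_eq_inner algebra_simps)
  note I = regular_integrable[OF R t]
  show "integrable lborel (\<lambda>x. p x t * (norm (w x t + c *\<^sub>R score p x t))\<^sup>2)"
    unfolding norm_eq using I by simp
  show "integrable lborel (\<lambda>x. p x t * ((w x t + c *\<^sub>R score p x t) \<bullet> score p x t))"
    unfolding inner_eq using I by simp
  show "(LINT x|lborel. p x t * (norm (w x t + c *\<^sub>R score p x t))\<^sup>2)
           = kinetic_energy p w t + 2 * c * score_pairing p w t + c\<^sup>2 * fisher_information p t"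
    unfolding norm_eq kinetic_energy_def score_pairing_def fisher_information_def using I by simp
  show "(LINT x|lborel. p x t * ((w x t + c *\<^sub>R score p x t) \<bullet> score p x t))
           = score_pairing p w t + c * fisher_information p t"
    unfolding inner_eq score_pairing_def fisher_information_def using I by simp
qed

lemma set_integrable_score_shift:
  fixes k :: "real \<Rightarrow> real"
  assumes R: "regular \<sigma> p w g" and k: "continuous_on {0..1} k"
  shows "set_integrable lborel {0..1} (kinetic_energy p (\<lambda>x t. w x t + k t *\<^sub>R score p x t))"
    and "set_integrable lborel {0..1} (score_pairing p (\<lambda>x t. w x t + k t *\<^sub>R score p x t))"
proof -
  have KE: "kinetic_energy p (\<lambda>x t. w x t + k t *\<^sub>R score p x t) t
      = kinetic_energy p w t + 2 * k t * score_pairing p w t + (k t)\<^sup>2 * fisher_information p t"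
    if "t \<in> {0..1}" for t
    using score_shift_moments(3)[OF R that] by (simp add: kinetic_energy_def)
  have "set_integrable lborel {0..1} (\<lambda>t. kinetic_energy p w t + 2 * k t * score_pairing p w t
      + (k t)\<^sup>2 * fisher_information p t)"
    using regular_time_integrable[OF R] k
    by (intro set_integral_add(1) set_integrable_mult_continuous continuous_intros) auto
  then show "set_integrable lborel {0..1} (kinetic_energy p (\<lambda>x t. w x t + k t *\<^sub>R score p x t))"
    by (rule set_integrable_cong[THEN iffD1, rotated -1]) (use KE in auto)
  have SP: "score_pairing p (\<lambda>x t. w x t + k t *\<^sub>R score p x t) t
      = score_pairing p w t + k t * fisher_information p t"
    if "t \<in> {0..1}" for t
    using score_shift_moments(4)[OF R that] by (simp add: score_pairing_def)
  have "set_integrable lborel {0..1} (\<lambda>t. score_pairing p w t + k t * fisher_information p t)"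
    using regular_time_integrable[OF R] k
    by (intro set_integral_add(1) set_integrable_mult_continuous) auto
  then show "set_integrable lborel {0..1} (score_pairing p (\<lambda>x t. w x t + k t *\<^sub>R score p x t))"
    by (rule set_integrable_cong[THEN iffD1, rotated -1]) (use SP in auto)
qed

lemma regular_score_shift:
  fixes k :: "real \<Rightarrow> real"
  assumes R: "regular \<sigma> p w g" and k: "continuous_on {0..1} k"
  shows "regular \<sigma> p (\<lambda>x t. w x t + k t *\<^sub>R score p x t) g"
proof (rule regular_change_drift[OF R])
  fix t :: real and x assume t: "t \<in> {0..1}"
  show "(\<lambda>y. p y t *\<^sub>R (w y t + k t *\<^sub>R score p y t)) differentiable (at x)"
    by (rule flux_add_score_differentiable[OF R t])
next
  fix t :: real assume t: "t \<in> {0..1}"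
  note M = score_shift_moments[OF R t, of "k t"]
  have divg_eq: "(\<lambda>x. divg (\<lambda>y. p y t *\<^sub>R (w y t + k t *\<^sub>R score p y t)) x * (1 + ln (p x t)))
      = (\<lambda>x. divg (\<lambda>y. p y t *\<^sub>R w y t) x * (1 + ln (p x t))
             + k t * (lap (\<lambda>y. p y t) x * (1 + ln (p x t))))"
    unfolding divg_flux_add_score[OF R t] by (simp add: algebra_simps)
  show "integrable lborel (\<lambda>x. p x t * (norm (w x t + k t *\<^sub>R score p x t))\<^sup>2)"
    by (rule M(1))
  show "integrable lborel (\<lambda>x. p x t * ((w x t + k t *\<^sub>R score p x t) \<bullet> score p x t))"
    by (rule M(2))
  show "integrable lborel
      (\<lambda>x. divg (\<lambda>y. p y t *\<^sub>R (w y t + k t *\<^sub>R score p y t)) x * (1 + ln (p x t)))"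
    unfolding divg_eq using regular_integrable[OF R t] by simp
  have "score_pairing p (\<lambda>x t. w x t + k t *\<^sub>R score p x t) t
      = score_pairing p w t + k t * fisher_information p t"
    using M(4) by (simp add: score_pairing_def)
  then show "(LINT x|lborel. divg (\<lambda>y. p y t *\<^sub>R (w y t + k t *\<^sub>R score p y t)) x * (1 + ln (p x t)))
      = - score_pairing p (\<lambda>x t. w x t + k t *\<^sub>R score p x t) t"
    unfolding divg_eq using regular_integrable[OF R t] regular_integration_by_parts[OF R t] by simp
next
  show "set_integrable lborel {0..1} (kinetic_energy p (\<lambda>x t. w x t + k t *\<^sub>R score p x t))"
    using R k by (rule set_integrable_score_shift(1))
next
  show "set_integrable lborel {0..1} (score_pairing p (\<lambda>x t. w x t + k t *\<^sub>R score p x t))"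
    using R k by (rule set_integrable_score_shift(2))
qed

lemma to_v_mem_adm_ce_iff:
  assumes \<sigma>: "continuous_on {0..1} \<sigma>"
  shows "to_v \<sigma> z \<in> adm_ce \<sigma> \<nu>0 \<nu>1 \<longleftrightarrow> z \<in> adm_ruot \<sigma> \<nu>0 \<nu>1"
proof -
  obtain p b g where z: "z = (p, b, g)" by (cases z)
  define k where "k t = (1/2) * (\<sigma> t)\<^sup>2" for t
  define v where "v = (\<lambda>x t. b x t - k t *\<^sub>R score p x t)"
  have to_v_z: "to_v \<sigma> (p, b, g) = (p, v, g)"
    by (simp add: to_v_def v_def k_def)
  have k: "continuous_on {0..1} k" "continuous_on {0..1} (\<lambda>t. - k t)"
    unfolding k_def using \<sigma> by (auto intro!: continuous_intros)
  have b_eq: "(\<lambda>x t. v x t + k t *\<^sub>R score p x t) = b"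
    and v_eq: "(\<lambda>x t. b x t + (- k t) *\<^sub>R score p x t) = v"
    by (simp_all add: v_def)
  have regular_iff: "regular \<sigma> p v g \<longleftrightarrow> regular \<sigma> p b g"
    using regular_score_shift[of \<sigma> p v g k, OF _ k(1), unfolded b_eq]
      regular_score_shift[of \<sigma> p b g "\<lambda>t. - k t", OF _ k(2), unfolded v_eq]
    by blast
  have divg_v: "divg (\<lambda>y. p y t *\<^sub>R v y t) x = divg (\<lambda>y. p y t *\<^sub>R b y t) x - k t * lap (\<lambda>y. p y t) x"
    if "regular \<sigma> p b g" "t \<in> {0..1}" for t x
    using divg_flux_add_score[OF that, of "- k t" x] by (simp add: v_def)
  show ?thesis
    unfolding z to_v_z adm_ce_def adm_ruot_def using regular_iff divg_v by (auto simp: k_def)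
qed

lemma to_v_inj: "inj (to_v \<sigma>)"
proof (rule inj_on_inverseI)
  fix z
  show "(\<lambda>(p, v, g). (p, \<lambda>x t. v x t + ((1/2) * (\<sigma> t)\<^sup>2) *\<^sub>R score p x t, g)) (to_v \<sigma> z) = z"
    by (cases z) (simp add: to_v_def)
qed

lemma bij_betw_to_v:
  assumes "continuous_on {0..1} \<sigma>"
  shows "bij_betw (to_v \<sigma>) (adm_ruot \<sigma> \<nu>0 \<nu>1) (adm_ce \<sigma> \<nu>0 \<nu>1)"
proof (rule bij_betw_imageI)
  show "inj_on (to_v \<sigma>) (adm_ruot \<sigma> \<nu>0 \<nu>1)"
    using to_v_inj by (rule inj_on_subset) simp
  show "to_v \<sigma> ` adm_ruot \<sigma> \<nu>0 \<nu>1 = adm_ce \<sigma> \<nu>0 \<nu>1"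
  proof (intro equalityI subsetI)
    fix w assume "w \<in> to_v \<sigma> ` adm_ruot \<sigma> \<nu>0 \<nu>1"
    then obtain z where "z \<in> adm_ruot \<sigma> \<nu>0 \<nu>1" and "w = to_v \<sigma> z"
      by blast
    then show "w \<in> adm_ce \<sigma> \<nu>0 \<nu>1"
      using to_v_mem_adm_ce_iff[OF assms, where z = z] by blast
  next
    fix w assume w: "w \<in> adm_ce \<sigma> \<nu>0 \<nu>1"
    obtain p v g where w_eq: "w = (p, v, g)" by (cases w)
    define z where "z = (p, \<lambda>x t. v x t + ((1/2) * (\<sigma> t)\<^sup>2) *\<^sub>R score p x t, g)"
    have "to_v \<sigma> z = w"
      by (simp add: z_def w_eq to_v_def)
    moreover have "z \<in> adm_ruot \<sigma> \<nu>0 \<nu>1"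
      using w to_v_mem_adm_ce_iff[OF assms, of z] calculation by simp
    ultimately show "w \<in> to_v \<sigma> ` adm_ruot \<sigma> \<nu>0 \<nu>1"
      by blast
  qed
qed

lemma entropy_derivative_fokker_planck:
  assumes z: "(p, b, g) \<in> adm_ruot \<sigma> \<nu>0 \<nu>1" and t: "t \<in> {0..1}"
  shows "((\<lambda>s. entropy (\<lambda>x. p x s)) has_real_derivative
           score_pairing p b t - (\<sigma> t)\<^sup>2 / 2 * fisher_information p t + growth_entropy p g t)
         (at t within {0..1})"
proof -
  have R: "regular \<sigma> p b g"
    and fp: "\<And>x. dt p x t = - divg (\<lambda>y. p y t *\<^sub>R b y t) x
                 + (1/2) * (\<sigma> t)\<^sup>2 * lap (\<lambda>y. p y t) x + g x t * p x t"
    using z t by (auto simp: adm_ruot_def)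
  have "(\<lambda>x. dt p x t * (1 + ln (p x t)))
      = (\<lambda>x. - (divg (\<lambda>y. p y t *\<^sub>R b y t) x * (1 + ln (p x t)))
             + (\<sigma> t)\<^sup>2 / 2 * (lap (\<lambda>y. p y t) x * (1 + ln (p x t)))
             + (g x t * p x t + g x t * p x t * ln (p x t)))"
    by (rule ext) (simp add: fp field_simps)
  then have "(LINT x|lborel. dt p x t * (1 + ln (p x t)))
      = score_pairing p b t - (\<sigma> t)\<^sup>2 / 2 * fisher_information p t + growth_entropy p g t"
    using regular_integrable[OF R t] regular_integration_by_parts[OF R t]
      regular_growth_entropy[OF R t]
    by simp
  then show ?thesis
    using regular_entropy_derivative[OF R t] by simp
qed

definition weighted_entropy_rate :: "(real \<Rightarrow> real) \<Rightarrow> ('a::euclidean_space \<Rightarrow> real \<Rightarrow> real) \<Rightarrow>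
    ('a \<Rightarrow> real \<Rightarrow> 'a) \<Rightarrow> ('a \<Rightarrow> real \<Rightarrow> real) \<Rightarrow> real \<Rightarrow> real" where
  "weighted_entropy_rate \<sigma> p b g t =
     dsig2 \<sigma> t * entropy (\<lambda>x. p x t) + (\<sigma> t)\<^sup>2 * score_pairing p b t
     - (\<sigma> t)^4 / 2 * fisher_information p t + (\<sigma> t)\<^sup>2 * growth_entropy p g t"

lemma weighted_entropy_has_derivative:
  assumes z: "(p, b, g) \<in> adm_ruot \<sigma> \<nu>0 \<nu>1" and t: "t \<in> {0..1}"
    and \<sigma>: "\<sigma> differentiable (at t within {0..1})"
  shows "((\<lambda>s. (\<sigma> s)\<^sup>2 * entropy (\<lambda>x. p x s)) has_vector_derivative weighted_entropy_rate \<sigma> p b g t)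
           (at t within {0..1})"
proof -
  have "((\<lambda>s. (\<sigma> s)\<^sup>2) has_real_derivative dsig2 \<sigma> t) (at t within {0..1})"
    unfolding dsig2_def has_real_derivative_iff_has_vector_derivative
    using \<sigma> by (intro vector_derivative_works[THEN iffD1] differentiable_power) auto
  from DERIV_mult[OF this entropy_derivative_fokker_planck[OF z t]] show ?thesis
    by (simp add: weighted_entropy_rate_def has_real_derivative_iff_has_vector_derivative
        algebra_simps power2_eq_square power4_eq_xxxx)
qed

lemma set_integrable_weighted_entropy_rate:
  assumes R: "regular \<sigma> p b g" and \<sigma>: "continuous_on {0..1} \<sigma>"
  shows "set_integrable lborel {0..1} (weighted_entropy_rate \<sigma> p b g)"
proof -
  have s2: "continuous_on {0..1} (\<lambda>t. (\<sigma> t)\<^sup>2)" and s4: "continuous_on {0..1} (\<lambda>t. (\<sigma> t)^4 / 2)"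
    using \<sigma> by (auto intro!: continuous_intros)
  note T = regular_time_integrable[OF R]
  show ?thesis
    unfolding weighted_entropy_rate_def[abs_def]
    by (intro set_integral_add(1) set_integral_diff(1) T(5)
        T(3)[THEN set_integrable_mult_continuous, OF s2]
        T(2)[THEN set_integrable_mult_continuous, OF s4]
        T(4)[THEN set_integrable_mult_continuous, OF s2])
qed

definition ce_lagrangian :: "(real \<Rightarrow> real) \<Rightarrow> ('a::euclidean_space \<Rightarrow> real \<Rightarrow> real) \<Rightarrow>
    ('a \<Rightarrow> real \<Rightarrow> 'a) \<Rightarrow> ('a \<Rightarrow> real \<Rightarrow> real) \<Rightarrow> 'a \<Rightarrow> real \<Rightarrow> real" where
  "ce_lagrangian \<sigma> p v g x t =
     ((1/2) * (norm (v x t))\<^sup>2 + (\<sigma> t)^4 / 8 * (norm (score p x t))\<^sup>2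
      - (\<sigma> t)\<^sup>2 / 2 * (1 + ln (p x t)) * g x t - (1/2) * dsig2 \<sigma> t * ln (p x t)) * p x t"

lemma integral_ce_lagrangian_to_v:
  assumes R: "regular \<sigma> p b g" and t: "t \<in> {0..1}"
  shows "(LINT x|lborel. ce_lagrangian \<sigma> p (\<lambda>x t. b x t - ((1/2) * (\<sigma> t)\<^sup>2) *\<^sub>R score p x t) g x t)
      = (1/2) * kinetic_energy p b t - (1/2) * weighted_entropy_rate \<sigma> p b g t"
proof -
  have sq: "(norm (b x t - ((1/2) * (\<sigma> t)\<^sup>2) *\<^sub>R score p x t))\<^sup>2
      = (norm (b x t))\<^sup>2 - (\<sigma> t)\<^sup>2 * (b x t \<bullet> score p x t) + (\<sigma> t)^4 / 4 * (norm (score p x t))\<^sup>2" for x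
    using power2_norm_add_scaleR[of "b x t" "- ((1/2) * (\<sigma> t)\<^sup>2)" "score p x t"]
    by (simp add: power2_eq_square power4_eq_xxxx)
  have "(\<lambda>x. ce_lagrangian \<sigma> p (\<lambda>x t. b x t - ((1/2) * (\<sigma> t)\<^sup>2) *\<^sub>R score p x t) g x t)
      = (\<lambda>x. (1/2) * (p x t * (norm (b x t))\<^sup>2) - (\<sigma> t)\<^sup>2 / 2 * (p x t * (b x t \<bullet> score p x t))
             + (\<sigma> t)^4 / 4 * (p x t * (norm (score p x t))\<^sup>2) - (\<sigma> t)\<^sup>2 / 2 * (g x t * p x t)
             - (\<sigma> t)\<^sup>2 / 2 * (g x t * p x t * ln (p x t)) - (1/2) * dsig2 \<sigma> t * (p x t * ln (p x t)))"
    unfolding ce_lagrangian_def sq by (rule ext) (simp add: field_simps)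
  then have "(LINT x|lborel. ce_lagrangian \<sigma> p (\<lambda>x t. b x t - ((1/2) * (\<sigma> t)\<^sup>2) *\<^sub>R score p x t) g x t)
      = (1/2) * kinetic_energy p b t - (\<sigma> t)\<^sup>2 / 2 * score_pairing p b t
        + (\<sigma> t)^4 / 4 * fisher_information p t - (\<sigma> t)\<^sup>2 / 2 * (LINT x|lborel. g x t * p x t)
        - (\<sigma> t)\<^sup>2 / 2 * (LINT x|lborel. g x t * p x t * ln (p x t))
        - (1/2) * dsig2 \<sigma> t * entropy (\<lambda>x. p x t)"
    using regular_integrable[OF R t]
    by (simp add: kinetic_energy_def score_pairing_def fisher_information_def entropy_def)
  then show ?thesis
    using regular_growth_entropy[OF R t] by (simp add: weighted_entropy_rate_def algebra_simps)
qed

lemma kinetic_action_eq: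
  assumes z: "(p, b, g) \<in> adm_ruot \<sigma> \<nu>0 \<nu>1"
    and \<sigma>: "\<forall>t\<in>{0..1}. \<sigma> differentiable (at t within {0..1})"
  shows "(LINT t:{0..1}|lborel. LINT x|lborel. (1/2) * (norm (b x t))\<^sup>2 * p x t)
    = (LINT t:{0..1}|lborel. LINT x|lborel.
         ce_lagrangian \<sigma> p (\<lambda>x t. b x t - ((1/2) * (\<sigma> t)\<^sup>2) *\<^sub>R score p x t) g x t)
      + (1/2) * ((\<sigma> 1)\<^sup>2 * entropy \<nu>1 - (\<sigma> 0)\<^sup>2 * entropy \<nu>0)"
proof -
  have R: "regular \<sigma> p b g" and C: "common_adm \<nu>0 \<nu>1 p"
    using z by (auto simp: adm_ruot_def)
  have "entropy (\<lambda>x. p x 0) = entropy \<nu>0" "entropy (\<lambda>x. p x 1) = entropy \<nu>1"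
    using C by (simp_all add: common_adm_def)
  with fundamental_theorem_of_calculus[of 0 1 "\<lambda>s. (\<sigma> s)\<^sup>2 * entropy (\<lambda>x. p x s)"
      "weighted_entropy_rate \<sigma> p b g"]
    weighted_entropy_has_derivative[OF z _ \<sigma>[rule_format]]
  have "(weighted_entropy_rate \<sigma> p b g has_integral (\<sigma> 1)\<^sup>2 * entropy \<nu>1 - (\<sigma> 0)\<^sup>2 * entropy \<nu>0) {0..1}"
    by simp
  moreover have W_int: "set_integrable lborel {0..1} (weighted_entropy_rate \<sigma> p b g)"
    using R \<sigma> by (intro set_integrable_weighted_entropy_rate differentiable_imp_continuous_on)
      (simp_all add: differentiable_on_def)
  ultimately have FTC: "(LINT t:{0..1}|lborel. weighted_entropy_rate \<sigma> p b g t)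
      = (\<sigma> 1)\<^sup>2 * entropy \<nu>1 - (\<sigma> 0)\<^sup>2 * entropy \<nu>0"
    using set_borel_integral_eq_integral(2) integral_unique by metis
  have "(LINT t:{0..1}|lborel. LINT x|lborel.
         ce_lagrangian \<sigma> p (\<lambda>x t. b x t - ((1/2) * (\<sigma> t)\<^sup>2) *\<^sub>R score p x t) g x t)
      = (LINT t:{0..1}|lborel. (1/2) * kinetic_energy p b t - (1/2) * weighted_entropy_rate \<sigma> p b g t)"
    by (rule set_lebesgue_integral_cong) (simp, blast intro: integral_ce_lagrangian_to_v[OF R])
  also have "\<dots> = (1/2) * (LINT t:{0..1}|lborel. kinetic_energy p b t)
      - (1/2) * (LINT t:{0..1}|lborel. weighted_entropy_rate \<sigma> p b g t)"
    using regular_time_integrable(1)[OF R] W_int by (simp add: set_integral_diff(2))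
  moreover have "(LINT t:{0..1}|lborel. LINT x|lborel. (1/2) * (norm (b x t))\<^sup>2 * p x t)
      = (1/2) * (LINT t:{0..1}|lborel. kinetic_energy p b t)"
  proof -
    have "(\<lambda>x. (1/2) * (norm (b x t))\<^sup>2 * p x t) = (\<lambda>x. (1/2) * (p x t * (norm (b x t))\<^sup>2))" for t
      by (simp add: mult_ac)
    then show ?thesis
      by (simp add: kinetic_energy_def)
  qed
  ultimately show ?thesis
    using FTC by (simp add: algebra_simps)
qed

lemma J_ruot_eq_J_ce_to_v:
  assumes z: "z \<in> adm_ruot \<sigma> \<nu>0 \<nu>1"
    and \<sigma>: "\<forall>t\<in>{0..1}. \<sigma> differentiable (at t within {0..1})"
  shows "J_ruot \<alpha> \<Psi> z = J_ce \<sigma> \<alpha> \<Psi> (to_v \<sigma> z)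
           + ereal ((1/2) * ((\<sigma> 1)\<^sup>2 * entropy \<nu>1 - (\<sigma> 0)\<^sup>2 * entropy \<nu>0))"
proof -
  obtain p b g where z_eq: "z = (p, b, g)" by (cases z)
  have shift: "ereal (a + k) + P = ereal a + P + ereal k" for a k :: real and P :: ereal
    by (metis add.assoc add.commute plus_ereal.simps(1))
  show ?thesis
    unfolding z_eq J_ruot_def J_ce_def to_v_def prod.case kinetic_action_eq[OF z[unfolded z_eq] \<sigma>]
      ce_lagrangian_def
    by (rule shift)
qed

lemma bij_betw_minimizers:
  fixes J :: "'a \<Rightarrow> ereal" and J' :: "'b \<Rightarrow> ereal"
  assumes bij: "bij_betw f A B" and J: "\<And>z. z \<in> A \<Longrightarrow> J z = J' (f z) + ereal c" and z: "z \<in> A"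
  shows "(\<forall>z'\<in>A. J z \<le> J z') \<longleftrightarrow> (\<forall>w\<in>B. J' (f z) \<le> J' w)"
proof -
  have "(\<forall>z'\<in>A. J z \<le> J z') \<longleftrightarrow> (\<forall>z'\<in>A. J' (f z) \<le> J' (f z'))"
    using J z by (simp add: ereal_add_le_add_iff2)
  also have "\<dots> \<longleftrightarrow> (\<forall>w\<in>f ` A. J' (f z) \<le> J' w)"
    by blast
  finally show ?thesis
    using bij_betw_imp_surj_on[OF bij] by simp
qed

theorem theorem2:
  fixes \<nu>0 \<nu>1 :: "'a::euclidean_space \<Rightarrow> real"
    and \<sigma> :: "real \<Rightarrow> real" and \<alpha> :: real and \<Psi> :: "real \<Rightarrow> ennreal"
  assumes "\<forall>x. \<nu>0 x \<ge> 0" and "\<forall>x. \<nu>1 x \<ge> 0"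
    and "\<forall>t\<in>{0..1}. \<sigma> t > 0"
    and "\<forall>t\<in>{0..1}. \<sigma> differentiable (at t within {0..1})"
    and "\<alpha> > 0"
  shows "bij_betw (to_v \<sigma>) (adm_ruot \<sigma> \<nu>0 \<nu>1) (adm_ce \<sigma> \<nu>0 \<nu>1)
    \<and> (\<forall>z\<in>adm_ruot \<sigma> \<nu>0 \<nu>1.
         J_ruot \<alpha> \<Psi> z = J_ce \<sigma> \<alpha> \<Psi> (to_v \<sigma> z)
           + ereal ((1/2) * ((\<sigma> 1)\<^sup>2 * entropy \<nu>1 - (\<sigma> 0)\<^sup>2 * entropy \<nu>0)))
    \<and> (\<forall>z\<in>adm_ruot \<sigma> \<nu>0 \<nu>1.
         (\<forall>z'\<in>adm_ruot \<sigma> \<nu>0 \<nu>1. J_ruot \<alpha> \<Psi> z \<le> J_ruot \<alpha> \<Psi> z') \<longleftrightarrow>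
         (\<forall>w\<in>adm_ce \<sigma> \<nu>0 \<nu>1. J_ce \<sigma> \<alpha> \<Psi> (to_v \<sigma> z) \<le> J_ce \<sigma> \<alpha> \<Psi> w))"
proof -
  have "continuous_on {0..1} \<sigma>"
    using assms(4) by (intro differentiable_imp_continuous_on) (simp add: differentiable_on_def)
  then have bij: "bij_betw (to_v \<sigma>) (adm_ruot \<sigma> \<nu>0 \<nu>1) (adm_ce \<sigma> \<nu>0 \<nu>1)"
    by (rule bij_betw_to_v)
  have J: "J_ruot \<alpha> \<Psi> z = J_ce \<sigma> \<alpha> \<Psi> (to_v \<sigma> z)
             + ereal ((1/2) * ((\<sigma> 1)\<^sup>2 * entropy \<nu>1 - (\<sigma> 0)\<^sup>2 * entropy \<nu>0))"
    if "z \<in> adm_ruot \<sigma> \<nu>0 \<nu>1" for z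
    using that assms(4) by (rule J_ruot_eq_J_ce_to_v)
  have "(\<forall>z'\<in>adm_ruot \<sigma> \<nu>0 \<nu>1. J_ruot \<alpha> \<Psi> z \<le> J_ruot \<alpha> \<Psi> z') \<longleftrightarrow>
         (\<forall>w\<in>adm_ce \<sigma> \<nu>0 \<nu>1. J_ce \<sigma> \<alpha> \<Psi> (to_v \<sigma> z) \<le> J_ce \<sigma> \<alpha> \<Psi> w)"
    if "z \<in> adm_ruot \<sigma> \<nu>0 \<nu>1" for z
    using bij J that by (rule bij_betw_minimizers)
  with bij J show ?thesis
    by blast
qed

end
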